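(* For all positive integers $\beta,p$, the transition matrix $A_{\beta,p}$ is irreducible.
   Context: Let $\beta,p$ be positive integers. Let $S_{\beta,p}=\{\mathbf{s}\in\{0,1\}^{\beta-1}: wt(\mathbf{s})\le p\}$, where $wt$ is Hamming weight, let $M=\sum_{i=0}^p\binom{\beta-1}{i}=|S_{\beta,p}|$, and fix an ordering $\mathbf{s}_1,\ldots,\mathbf{s}_M$ of $S_{\beta,p}$. The merge of two vectors $\mathbf{u},\mathbf{v}\in\{0,1\}^{\beta-1}$ is $f(\mathbf{u},\mathbf{v})=\mathbf{u}$ concatenated with the last bit of $\mathbf{v}$ (a vector of length $\beta$) if the last $\beta-2$ bits of $\mathbf{u}$ equal the first $\beta-2$ bits of $\mathbf{v}$, and $f(\mathbf{u},\mathbf{v})=\mathbf{F}$ (failure) otherwise. The transition matrix $A_{\beta,p}=(a_{i,j})\in\{0,1\}^{M\times M}$ has $a_{i,j}=1$ if $f(\mathbf{s}_i,\mathbf{s}_j)\neq\mathbf{F}$ and $wt(f(\mathbf{s}_i,\mathbf{s}_j))\le p$, and $a_{i,j}=0$ otherwise. A matrix $A\in\{0,1\}^{M\times M}$ is irreducible if for all $1\le i,j\le M$ there is an integer $k\ge 0$ (possibly depending on $i,j$) with $(A^k)_{i,j}>0$. *)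

theory Defs
  imports "Jordan_Normal_Form.Matrix"
begin

text \<open>Binary vectors are modelled as bool lists (True = 1).\<close>

definition wt :: "bool list \<Rightarrow> nat" where
  "wt xs = length (filter id xs)"

definition S_set :: "nat \<Rightarrow> nat \<Rightarrow> bool list set" where
  "S_set \<beta> p = {s. length s = \<beta> - 1 \<and> wt s \<le> p}"

definition M_size :: "nat \<Rightarrow> nat \<Rightarrow> nat" where
  "M_size \<beta> p = (\<Sum>i=0..p. (\<beta> - 1) choose i)"

text \<open>Merge; None plays the role of the failure symbol F.
  The last beta-2 bits of u are compared with the first beta-2 bits of v.\<close>
definition merge :: "nat \<Rightarrow> bool list \<Rightarrow> bool list \<Rightarrow> bool list option" where
  "merge \<beta> u v =
     (if drop (length u - (\<beta> - 2)) u = take (\<beta> - 2) v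
      then Some (u @ [last v]) else None)"

definition trans_mat :: "nat \<Rightarrow> nat \<Rightarrow> (nat \<Rightarrow> bool list) \<Rightarrow> nat mat" where
  "trans_mat \<beta> p s = mat (M_size \<beta> p) (M_size \<beta> p)
     (\<lambda>(i,j). case merge \<beta> (s i) (s j) of
               None \<Rightarrow> 0
             | Some w \<Rightarrow> (if wt w \<le> p then 1 else 0))"

definition irreducible_mat :: "nat mat \<Rightarrow> bool" where
  "irreducible_mat A \<longleftrightarrow> (\<forall>i < dim_row A. \<forall>j < dim_row A. \<exists>k. (A ^\<^sub>m k) $$ (i,j) > 0)"

end

theory Submission
  imports Defs
begin

text \<open>Read the states as words of length \<open>\<beta> - 1\<close>: a positive entry of the matrix is a shift
  \<open>u \<mapsto> tl u @ [b]\<close> whose merged word \<open>u @ [b]\<close> has weight at most \<open>p\<close>. Shifting in zeros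
  takes any admissible word to the all-zero word without increasing weights, and shifting in
  the bits of a target word \<open>v\<close> takes the all-zero word to \<open>v\<close> through words of weight at
  most \<open>wt v\<close>. So the shift graph is strongly connected, and paths in it are positive entries
  of matrix powers.\<close>

lemma mat_pow_Suc_pos:
  fixes A :: "nat mat"
  assumes "A \<in> carrier_mat n n" and "i < n" "j < n" "l < n"
    and "0 < (A ^\<^sub>m k) $$ (i, j)" and "0 < A $$ (j, l)"
  shows "0 < (A ^\<^sub>m Suc k) $$ (i, l)"
proof -
  have "(A ^\<^sub>m Suc k) $$ (i, l) = row (A ^\<^sub>m k) i \<bullet> col A l"
    using assms by simp
  also have "\<dots> = (\<Sum>m<n. (A ^\<^sub>m k) $$ (i, m) * A $$ (m, l))"
    using assms unfolding scalar_prod_def by (auto simp: atLeast0LessThan intro: sum.cong)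
  also have "\<dots> \<ge> (A ^\<^sub>m k) $$ (i, j) * A $$ (j, l)"
    by (rule member_le_sum) (use assms in auto)
  finally show ?thesis
    using assms by (meson less_le_trans nat_0_less_mult_iff)
qed

lemma mat_pow_pos_if_rtranclp:
  fixes A :: "nat mat"
  assumes A: "A \<in> carrier_mat n n"
    and path: "(\<lambda>i j. i < n \<and> j < n \<and> 0 < A $$ (i, j))\<^sup>*\<^sup>* i j" and i: "i < n"
  shows "\<exists>k. 0 < (A ^\<^sub>m k) $$ (i, j)"
  using path
proof (induction rule: rtranclp_induct)
  case base
  have "(A ^\<^sub>m 0) $$ (i, i) = 1" using A i by simp
  then show ?case by (intro exI[of _ 0]) simp
next
  case (step j l)
  then show ?case using mat_pow_Suc_pos[OF A i] by blast
qed

lemma irreducible_mat_if_strongly_connected: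
  fixes A :: "nat mat"
  assumes A: "A \<in> carrier_mat n n"
    and "\<And>i j. i < n \<Longrightarrow> j < n \<Longrightarrow> (\<lambda>i j. i < n \<and> j < n \<and> 0 < A $$ (i, j))\<^sup>*\<^sup>* i j"
  shows "irreducible_mat A"
  using assms mat_pow_pos_if_rtranclp unfolding irreducible_mat_def by auto

lemma rtranclp_map_invariant:
  assumes "R\<^sup>*\<^sup>* x y" and "P x"
    and "\<And>a b. R a b \<Longrightarrow> P a \<Longrightarrow> P b \<and> Q (f a) (f b)"
  shows "Q\<^sup>*\<^sup>* (f x) (f y)"
proof -
  from assms(1) have "P y \<and> Q\<^sup>*\<^sup>* (f x) (f y)"
  proof (induction rule: rtranclp_induct)
    case base
    then show ?case using assms(2) by simp
  next
    case (step y z)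
    then show ?case using assms(3) by (meson rtranclp.rtrancl_into_rtrancl)
  qed
  then show ?thesis ..
qed

lemma wt_append [simp]: "wt (xs @ ys) = wt xs + wt ys"
  by (simp add: wt_def)

lemma wt_Cons [simp]: "wt (b # xs) = of_bool b + wt xs"
  by (simp add: wt_def)

lemma wt_Nil [simp]: "wt [] = 0"
  by (simp add: wt_def)

lemma wt_replicate_False [simp]: "wt (replicate m False) = 0"
  by (simp add: wt_def)

lemma wt_take_le: "wt (take m v) \<le> wt v"
  by (metis append_take_drop_id le_add1 wt_append)

lemma wt_drop_le: "wt (drop m v) \<le> wt v"
  by (metis append_take_drop_id le_add2 wt_append)

definition shift_edge :: "nat \<Rightarrow> bool list \<Rightarrow> bool list \<Rightarrow> bool" where
  "shift_edge p u v \<longleftrightarrow> u \<noteq> [] \<and> (\<exists>b. v = tl u @ [b] \<and> wt (u @ [b]) \<le> p)"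

lemma shift_edge_length: "shift_edge p u v \<Longrightarrow> length v = length u"
  by (auto simp: shift_edge_def)

lemma shift_edge_wt: "shift_edge p u v \<Longrightarrow> wt v \<le> p"
  unfolding shift_edge_def by (cases u) auto

lemma shift_edge_rtranclp_zeros:
  assumes "wt u \<le> p"
  shows "(shift_edge p)\<^sup>*\<^sup>* u (replicate (length u) False)"
proof -
  have "(shift_edge p)\<^sup>*\<^sup>* u (drop m u @ replicate m False)" if "m \<le> length u" for m
    using that
  proof (induction m)
    case 0
    then show ?case by simp
  next
    case (Suc m)
    let ?w = "drop m u @ replicate m False"
    have "tl ?w @ [False] = drop (Suc m) u @ replicate (Suc m) False"
      using Suc.prems by (simp add: drop_Suc tl_drop replicate_append_same)
    moreover have "wt (?w @ [False]) \<le> p"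
      using assms wt_drop_le[of m u] by simp
    ultimately have "shift_edge p ?w (drop (Suc m) u @ replicate (Suc m) False)"
      unfolding shift_edge_def using Suc.prems by (intro conjI exI[of _ False]) auto
    with Suc show ?case by (simp add: rtranclp.rtrancl_into_rtrancl)
  qed
  from this[of "length u"] show ?thesis by simp
qed

lemma zeros_rtranclp_shift_edge:
  assumes "wt v \<le> p"
  shows "(shift_edge p)\<^sup>*\<^sup>* (replicate (length v) False) v"
proof -
  have "(shift_edge p)\<^sup>*\<^sup>* (replicate (length v) False) (replicate (length v - m) False @ take m v)"
    if "m \<le> length v" for m
    using that
  proof (induction m)
    case 0
    then show ?case by simp
  next
    case (Suc m)
    let ?w = "replicate (length v - m) False @ take m v"
    have zeros: "length v - m = Suc (length v - Suc m)"
      using Suc.prems by simp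
    have take: "take (Suc m) v = take m v @ [v ! m]"
      using Suc.prems by (simp add: take_Suc_conv_app_nth)
    have "tl ?w @ [v ! m] = replicate (length v - Suc m) False @ take (Suc m) v"
      by (simp add: zeros take)
    moreover have "wt (?w @ [v ! m]) \<le> p"
      using assms wt_take_le[of "Suc m" v] take by simp
    ultimately have "shift_edge p ?w (replicate (length v - Suc m) False @ take (Suc m) v)"
      unfolding shift_edge_def by (intro conjI exI[of _ "v ! m"]) (simp_all add: zeros)
    with Suc show ?case by (simp add: rtranclp.rtrancl_into_rtrancl)
  qed
  from this[of "length v"] show ?thesis by simp
qed

lemma trans_mat_pos_if_shift_edge:
  assumes s: "bij_betw s {..<M_size \<beta> p} (S_set \<beta> p)"
    and u: "u \<in> S_set \<beta> p" and uv: "shift_edge p u v"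
  defines "idx \<equiv> inv_into {..<M_size \<beta> p} s"
  shows "v \<in> S_set \<beta> p \<and> 0 < trans_mat \<beta> p s $$ (idx u, idx v)"
proof
  obtain b where u_ne: "u \<noteq> []" and v: "v = tl u @ [b]" and wt_ub: "wt (u @ [b]) \<le> p"
    using uv unfolding shift_edge_def by blast
  have lu: "length u = \<beta> - 1"
    using u by (simp add: S_set_def)
  show v_S: "v \<in> S_set \<beta> p"
    using u shift_edge_length[OF uv] shift_edge_wt[OF uv] by (simp add: S_set_def)
  have "drop (length u - (\<beta> - 2)) u = take (\<beta> - 2) v"
    using u_ne lu v by (cases u) auto
  then have "merge \<beta> u v = Some (u @ [b])"
    by (simp add: merge_def v)
  moreover have "idx w < M_size \<beta> p" "s (idx w) = w" if "w \<in> S_set \<beta> p" for w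
    using bij_betw_apply[OF bij_betw_inv_into[OF s] that] bij_betw_inv_into_right[OF s that]
    unfolding idx_def by auto
  ultimately show "0 < trans_mat \<beta> p s $$ (idx u, idx v)"
    using u v_S wt_ub by (simp add: trans_mat_def)
qed

theorem lemma1:
  fixes \<beta> p :: nat and s :: "nat \<Rightarrow> bool list"
  assumes "\<beta> > 0" and "p > 0"
    and "bij_betw s {..<M_size \<beta> p} (S_set \<beta> p)"
  shows "irreducible_mat (trans_mat \<beta> p s)"
proof (rule irreducible_mat_if_strongly_connected)
  let ?N = "M_size \<beta> p" and ?S = "S_set \<beta> p" and ?A = "trans_mat \<beta> p s"
  let ?idx = "inv_into {..<?N} s"
  show "?A \<in> carrier_mat ?N ?N"
    by (simp add: trans_mat_def)
  fix i j assume "i < ?N" "j < ?N"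
  then have S: "s i \<in> ?S" "s j \<in> ?S" and idx: "?idx (s i) = i" "?idx (s j) = j"
    using bij_betw_apply[OF assms(3)] bij_betw_inv_into_left[OF assms(3)] by auto
  then have "(shift_edge p)\<^sup>*\<^sup>* (s i) (s j)"
    using shift_edge_rtranclp_zeros[of "s i" p] zeros_rtranclp_shift_edge[of "s j" p]
    by (auto simp: S_set_def)
  then have "(\<lambda>i j. i < ?N \<and> j < ?N \<and> 0 < ?A $$ (i, j))\<^sup>*\<^sup>* (?idx (s i)) (?idx (s j))"
    using S(1)
  proof (rule rtranclp_map_invariant[where P = "\<lambda>u. u \<in> ?S"])
    fix u v assume "shift_edge p u v" "u \<in> ?S"
    with trans_mat_pos_if_shift_edge[OF assms(3)] bij_betw_apply[OF bij_betw_inv_into[OF assms(3)]]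
    show "v \<in> ?S \<and> ?idx u < ?N \<and> ?idx v < ?N \<and> 0 < ?A $$ (?idx u, ?idx v)"
      by blast
  qed
  then show "(\<lambda>i j. i < ?N \<and> j < ?N \<and> 0 < ?A $$ (i, j))\<^sup>*\<^sup>* i j"
    by (simp only: idx)
qed

end
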